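(* 1. For every $i\in\mathcal{N}$, the random variable $Z_{i,\epsilon}$ converges surely (i.e. pointwise for every outcome) to $Z_i$ as $\epsilon\to+\infty$. 2. The limit $\lim_{\epsilon\to+\infty}\gamma(\epsilon)$ exists and $$\lim_{\epsilon\to+\infty}\Big(E\{Z_{i,\epsilon}\mid A_i=0,Y_i=1\}-E\{Z_{i,\epsilon}\mid A_i=1,Y_i=1\}\Big)=E\{Z_i\mid A_i=0,Y_i=1\}-E\{Z_i\mid A_i=1,Y_i=1\},$$ i.e. the algorithm $\mathscr{A}$ is $\gamma_\infty$-fair with $\gamma_\infty=\lim_{\epsilon\to+\infty}\gamma(\epsilon)$.
   Context: There are $n$ individuals indexed by $\mathcal{N}=\{1,\dots,n\}$. Individual $i$ is described by a random tuple $(X_i,A_i,Y_i)$, with features $X_i\in\mathcal{X}$, protected attribute $A_i\in\{0,1\}$ and qualification state $Y_i\in\{0,1\}$; the tuples are i.i.d. with a common distribution $\mathsf{F}$. A fixed function $r:\mathcal{X}\to\mathcal{R}$ is given, with $\mathcal{R}\subset[0,1]$ finite, and $R_i=r(X_i)$. Conditioning events $\{A_i=a,Y_i=1\}$ are assumed to have positive probability. For $\epsilon\ge0$, the exponential mechanism $\mathscr{A}_\epsilon$ selects $i$ with probability $Z_{i,\epsilon}=\exp(\epsilon R_i/2)/\sum_{j=1}^n\exp(\epsilon R_j/2)$ given the scores, and $\gamma(\epsilon)=E\{Z_{i,\epsilon}\mid A_i=0,Y_i=1\}-E\{Z_{i,\epsilon}\mid A_i=1,Y_i=1\}$. The algorithm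 $\mathscr{A}$ selects uniformly at random among the individuals with the highest score; with $N_{\max}=|\{i: R_i=\max_jR_j\}|$, let $Z_i=0$ if $R_i\ne\max_jR_j$ and $Z_i=1/N_{\max}$ otherwise, so $Z_i$ is the probability that $\mathscr{A}$ selects $i$ given the scores. An algorithm selecting one individual is $\gamma$-fair if $\Pr\{K_i=1\mid A_i=0,Y_i=1\}-\Pr\{K_i=1\mid A_i=1,Y_i=1\}=\gamma$, where $K_i$ is the indicator that $i$ is selected. *)

theory Defs
  imports "HOL-Probability.Probability"
begin

definition score :: "('x \<Rightarrow> real) \<Rightarrow> (nat \<Rightarrow> 'a \<Rightarrow> 'x) \<Rightarrow> nat \<Rightarrow> 'a \<Rightarrow> real" where
  "score r X i \<omega> = r (X i \<omega>)"

text \<open>Selection probability of the exponential mechanism with parameter eps.\<close>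
definition Zeps :: "('x \<Rightarrow> real) \<Rightarrow> (nat \<Rightarrow> 'a \<Rightarrow> 'x) \<Rightarrow> nat \<Rightarrow> real \<Rightarrow> nat \<Rightarrow> 'a \<Rightarrow> real" where
  "Zeps r X n \<epsilon> i \<omega> =
     exp (\<epsilon> * score r X i \<omega> / 2) / (\<Sum>j\<in>{1..n}. exp (\<epsilon> * score r X j \<omega> / 2))"

definition Zmax :: "('x \<Rightarrow> real) \<Rightarrow> (nat \<Rightarrow> 'a \<Rightarrow> 'x) \<Rightarrow> nat \<Rightarrow> nat \<Rightarrow> 'a \<Rightarrow> real" where
  "Zmax r X n i \<omega> =
     (let m = Max ((\<lambda>j. score r X j \<omega>) ` {1..n});
          Nmax = card {j\<in>{1..n}. score r X j \<omega> = m}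
      in if score r X i \<omega> \<noteq> m then 0 else 1 / real Nmax)"

definition cond_expect_event :: "'a measure \<Rightarrow> ('a \<Rightarrow> real) \<Rightarrow> 'a set \<Rightarrow> real" where
  "cond_expect_event M Z B = (\<integral>\<omega>. indicator B \<omega> * Z \<omega> \<partial>M) / measure M B"

definition gamma_eps :: "'a measure \<Rightarrow> ('x \<Rightarrow> real) \<Rightarrow> (nat \<Rightarrow> 'a \<Rightarrow> 'x) \<Rightarrow> (nat \<Rightarrow> 'a \<Rightarrow> nat)
      \<Rightarrow> (nat \<Rightarrow> 'a \<Rightarrow> nat) \<Rightarrow> nat \<Rightarrow> nat \<Rightarrow> real \<Rightarrow> real" where
  "gamma_eps M r X A Y n i \<epsilon> =
     cond_expect_event M (Zeps r X n \<epsilon> i) {\<omega>\<in>space M. A i \<omega> = 0 \<and> Y i \<omega> = 1}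
   - cond_expect_event M (Zeps r X n \<epsilon> i) {\<omega>\<in>space M. A i \<omega> = 1 \<and> Y i \<omega> = 1}"

end

theory Submission
  imports Defs
begin

text \<open>Dividing numerator and denominator of the softmax by \<open>exp (\<epsilon> m / 2)\<close>, with \<open>m\<close> the
  maximal score, every term becomes \<open>exp (\<epsilon> (R\<^sub>j - m) / 2)\<close>, which tends to \<open>1\<close> for the top
  scorers and to \<open>0\<close> for all others; hence \<open>Z\<^sub>i\<^sub>,\<^sub>\<epsilon> \<rightarrow> Z\<^sub>i\<close> surely. Since \<open>0 \<le> Z\<^sub>i\<^sub>,\<^sub>\<epsilon> \<le> 1\<close>, the
  bounded convergence theorem passes this limit through the conditional expectations, which are
  integrals against a fixed normalised indicator.\<close>

lemma tendsto_exp_mult_nonpos_at_top: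
  fixes a c :: real
  assumes "a \<le> 0" "c > 0"
  shows "((\<lambda>e. exp (e * a / c)) \<longlongrightarrow> (if a = 0 then 1 else 0)) at_top"
proof (cases "a = 0")
  case False
  with assms have "a / c < 0"
    by (simp add: divide_neg_pos)
  then have "filterlim (\<lambda>e. a / c * e) at_bot at_top"
    by (intro filterlim_tendsto_neg_mult_at_bot[OF tendsto_const] filterlim_ident)
  then have "filterlim (\<lambda>e. e * a / c) at_bot at_top"
    by (simp add: mult.commute)
  with False show ?thesis
    using filterlim_compose[OF exp_at_bot] by simp
qed simp

lemma tendsto_softmax_at_top:
  fixes s :: "'i \<Rightarrow> real" and c :: real
  assumes S: "finite S" "i \<in> S" and "c > 0"
  defines "m \<equiv> Max (s ` S)"
  shows "((\<lambda>e. exp (e * s i / c) / (\<Sum>j\<in>S. exp (e * s j / c))) \<longlongrightarrow>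
          (if s i \<noteq> m then 0 else 1 / real (card {j\<in>S. s j = m}))) at_top"
proof -
  have le_m: "s j \<le> m" if "j \<in> S" for j
    using S that unfolding m_def by auto
  have "m \<in> s ` S"
    using S unfolding m_def by (intro Max_in) auto
  then have card_pos: "card {j\<in>S. s j = m} > 0"
    using S by (auto simp: card_gt_0_iff)
  have shift: "exp (e * s i / c) / (\<Sum>j\<in>S. exp (e * s j / c)) =
      exp (e * (s i - m) / c) / (\<Sum>j\<in>S. exp (e * (s j - m) / c))" for e
  proof -
    have split: "exp (e * t / c) = exp (e * (t - m) / c) * exp (e * m / c)" for t
      by (simp only: exp_add[symmetric]) (simp add: diff_divide_distrib right_diff_distrib)
    show ?thesis
      by (subst (1 2) split) (simp add: sum_distrib_right[symmetric])
  qed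
  have term_lim: "((\<lambda>e. exp (e * (s j - m) / c)) \<longlongrightarrow> (if s j = m then 1 else 0)) at_top"
    if "j \<in> S" for j
    using tendsto_exp_mult_nonpos_at_top[of "s j - m" c] le_m[OF that] \<open>c > 0\<close> by simp
  have "((\<lambda>e. \<Sum>j\<in>S. exp (e * (s j - m) / c)) \<longlongrightarrow> (\<Sum>j\<in>S. if s j = m then 1 else 0)) at_top"
    by (intro tendsto_sum term_lim)
  also have "(\<Sum>j\<in>S. if s j = m then 1 else 0 :: real) = real (card {j\<in>S. s j = m})"
    using S by (simp add: sum.If_cases Int_def)
  finally have "((\<lambda>e. exp (e * (s i - m) / c) / (\<Sum>j\<in>S. exp (e * (s j - m) / c))) \<longlongrightarrow>
      (if s i = m then 1 else 0) / real (card {j\<in>S. s j = m})) at_top"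
    using card_pos by (intro tendsto_divide term_lim S) auto
  then show ?thesis
    unfolding shift by auto
qed

lemma tendsto_integral_at_top_bounded:
  fixes f :: "real \<Rightarrow> 'a \<Rightarrow> real"
  assumes "finite_measure M"
    and f_meas: "\<And>e. f e \<in> borel_measurable M"
    and bounded: "\<And>e \<omega>. \<omega> \<in> space M \<Longrightarrow> \<bar>f e \<omega>\<bar> \<le> C"
    and lim: "\<And>\<omega>. \<omega> \<in> space M \<Longrightarrow> ((\<lambda>e. f e \<omega>) \<longlongrightarrow> g \<omega>) at_top"
  shows "((\<lambda>e. \<integral>\<omega>. f e \<omega> \<partial>M) \<longlongrightarrow> (\<integral>\<omega>. g \<omega> \<partial>M)) at_top"
proof (rule integral_dominated_convergence_at_top[where w = "\<lambda>_. C"])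
  have "(\<lambda>k. f (real k) \<omega>) \<longlonglongrightarrow> g \<omega>" if "\<omega> \<in> space M" for \<omega>
    using lim[OF that] filterlim_real_sequentially by (rule filterlim_compose)
  then show "g \<in> borel_measurable M"
    using f_meas by (rule borel_measurable_LIMSEQ_real)
  show "integrable M (\<lambda>_. C)"
    using \<open>finite_measure M\<close> by (rule finite_measure.integrable_const)
qed (use f_meas bounded lim in auto)

lemma tendsto_cond_expect_event_at_top:
  fixes f :: "real \<Rightarrow> 'a \<Rightarrow> real"
  assumes "finite_measure M" "B \<in> sets M"
    and f_meas: "\<And>e. f e \<in> borel_measurable M"
    and bounded: "\<And>e \<omega>. \<omega> \<in> space M \<Longrightarrow> \<bar>f e \<omega>\<bar> \<le> C"
    and lim: "\<And>\<omega>. \<omega> \<in> space M \<Longrightarrow> ((\<lambda>e. f e \<omega>) \<longlongrightarrow> g \<omega>) at_top"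
  shows "((\<lambda>e. cond_expect_event M (f e) B) \<longlongrightarrow> cond_expect_event M g B) at_top"
proof -
  have "((\<lambda>e. \<integral>\<omega>. indicator B \<omega> * f e \<omega> \<partial>M) \<longlongrightarrow> (\<integral>\<omega>. indicator B \<omega> * g \<omega> \<partial>M)) at_top"
  proof (rule tendsto_integral_at_top_bounded[where C = C])
    show "\<bar>indicator B \<omega> * f e \<omega>\<bar> \<le> C" if "\<omega> \<in> space M" for e \<omega>
      using bounded[OF that, of e] by (auto simp: indicator_def)
  qed (use assms in \<open>auto intro: tendsto_mult\<close>)
  then show ?thesis
    unfolding cond_expect_event_def divide_inverse by (rule tendsto_mult_right)
qed

lemma score_measurable:
  assumes "X i \<in> measurable M Mx" "r \<in> borel_measurable Mx"
  shows "score r X i \<in> borel_measurable M"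
  using measurable_comp[OF assms] unfolding score_def[abs_def] comp_def .

lemma Zeps_measurable:
  assumes "\<And>j. j \<in> {1..n} \<Longrightarrow> X j \<in> measurable M Mx" "r \<in> borel_measurable Mx"
    and "i \<in> {1..n}"
  shows "Zeps r X n \<epsilon> i \<in> borel_measurable M"
  unfolding Zeps_def[abs_def]
  using assms score_measurable by measurable

lemma abs_Zeps_le_1:
  assumes "i \<in> {1..n}"
  shows "\<bar>Zeps r X n \<epsilon> i \<omega>\<bar> \<le> 1"
proof -
  have "exp (\<epsilon> * score r X i \<omega> / 2) \<le> (\<Sum>j\<in>{1..n}. exp (\<epsilon> * score r X j \<omega> / 2))"
    using assms by (intro member_le_sum) auto
  moreover have "0 < (\<Sum>j\<in>{1..n}. exp (\<epsilon> * score r X j \<omega> / 2))"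
    using assms by (intro sum_pos) auto
  ultimately show ?thesis
    unfolding Zeps_def by simp
qed

lemma Zeps_tendsto_Zmax:
  assumes "i \<in> {1..n}"
  shows "((\<lambda>\<epsilon>. Zeps r X n \<epsilon> i \<omega>) \<longlongrightarrow> Zmax r X n i \<omega>) at_top"
  using tendsto_softmax_at_top[of "{1..n}" i 2 "\<lambda>j. score r X j \<omega>"] assms
  unfolding Zeps_def Zmax_def Let_def by simp

lemma gamma_eps_tendsto:
  assumes "prob_space M"
    and "\<And>j. j \<in> {1..n} \<Longrightarrow> X j \<in> measurable M Mx" "r \<in> borel_measurable Mx"
    and "A i \<in> measurable M (count_space UNIV)" "Y i \<in> measurable M (count_space UNIV)"
    and "i \<in> {1..n}"
  shows "((\<lambda>\<epsilon>. gamma_eps M r X A Y n i \<epsilon>) \<longlongrightarrow>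
           cond_expect_event M (Zmax r X n i) {\<omega>\<in>space M. A i \<omega> = 0 \<and> Y i \<omega> = 1}
         - cond_expect_event M (Zmax r X n i) {\<omega>\<in>space M. A i \<omega> = 1 \<and> Y i \<omega> = 1}) at_top"
proof -
  have "finite_measure M"
    using \<open>prob_space M\<close> by (rule prob_space.axioms)
  moreover have "{\<omega>\<in>space M. A i \<omega> = a \<and> Y i \<omega> = 1} \<in> sets M" for a
    using assms(4,5) by measurable
  ultimately show ?thesis
    unfolding gamma_eps_def using assms
    by (intro tendsto_diff tendsto_cond_expect_event_at_top[where C = 1]
        Zeps_measurable abs_Zeps_le_1 Zeps_tendsto_Zmax)
qed

theorem lemma1:
  fixes M :: "'a measure" and Mx :: "'x measure"
    and X :: "nat \<Rightarrow> 'a \<Rightarrow> 'x" and A Y :: "nat \<Rightarrow> 'a \<Rightarrow> nat"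
    and r :: "'x \<Rightarrow> real" and n :: nat
    and F :: "('x \<times> nat \<times> nat) measure"
  assumes "prob_space M"
    and "n \<ge> 1"
    and "\<And>i. i \<in> {1..n} \<Longrightarrow> X i \<in> measurable M Mx"
    and "\<And>i. i \<in> {1..n} \<Longrightarrow> A i \<in> measurable M (count_space UNIV)"
    and "\<And>i. i \<in> {1..n} \<Longrightarrow> Y i \<in> measurable M (count_space UNIV)"
    and "\<And>i \<omega>. i \<in> {1..n} \<Longrightarrow> \<omega> \<in> space M \<Longrightarrow> A i \<omega> \<in> {0, 1}"
    and "\<And>i \<omega>. i \<in> {1..n} \<Longrightarrow> \<omega> \<in> space M \<Longrightarrow> Y i \<omega> \<in> {0, 1}"
    and "prob_space.indep_vars M
           (\<lambda>_. Mx \<Otimes>\<^sub>M count_space UNIV \<Otimes>\<^sub>M count_space UNIV)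
           (\<lambda>i \<omega>. (X i \<omega>, A i \<omega>, Y i \<omega>)) {1..n}"
    and "\<And>i. i \<in> {1..n} \<Longrightarrow>
           distr M (Mx \<Otimes>\<^sub>M count_space UNIV \<Otimes>\<^sub>M count_space UNIV)
             (\<lambda>\<omega>. (X i \<omega>, A i \<omega>, Y i \<omega>)) = F"
    and "r \<in> borel_measurable Mx"
    and "finite (range r)"
    and "range r \<subseteq> {0..1}"
    and "\<And>i a. i \<in> {1..n} \<Longrightarrow> a \<in> {0, 1} \<Longrightarrow>
           measure M {\<omega>\<in>space M. A i \<omega> = a \<and> Y i \<omega> = 1} > 0"
  shows "(\<forall>i\<in>{1..n}. \<forall>\<omega>\<in>space M.
            ((\<lambda>\<epsilon>. Zeps r X n \<epsilon> i \<omega>) \<longlongrightarrow> Zmax r X n i \<omega>) at_top)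
       \<and> (\<forall>i\<in>{1..n}.
            ((\<lambda>\<epsilon>. gamma_eps M r X A Y n i \<epsilon>) \<longlongrightarrow>
               cond_expect_event M (Zmax r X n i) {\<omega>\<in>space M. A i \<omega> = 0 \<and> Y i \<omega> = 1}
             - cond_expect_event M (Zmax r X n i) {\<omega>\<in>space M. A i \<omega> = 1 \<and> Y i \<omega> = 1}) at_top)"
proof (intro conjI ballI)
  fix i \<omega> assume i: "i \<in> {1..n}"
  show "((\<lambda>\<epsilon>. Zeps r X n \<epsilon> i \<omega>) \<longlongrightarrow> Zmax r X n i \<omega>) at_top"
    using i by (rule Zeps_tendsto_Zmax)
  show "((\<lambda>\<epsilon>. gamma_eps M r X A Y n i \<epsilon>) \<longlongrightarrow>
          cond_expect_event M (Zmax r X n i) {\<omega>\<in>space M. A i \<omega> = 0 \<and> Y i \<omega> = 1}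
        - cond_expect_event M (Zmax r X n i) {\<omega>\<in>space M. A i \<omega> = 1 \<and> Y i \<omega> = 1}) at_top"
    using assms(1,3,10) assms(4,5)[OF i] i by (rule gamma_eps_tendsto)
qed

end
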